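(* (Height-preserving contraction.) For all $n\geq1$, finite multisets of formulas $\Gamma,\Delta$, every formula $\nu$ and every classical formula $\alpha$: $\vdash^n\Gamma,\nu,\nu\Rightarrow\Delta$ implies $\vdash^n\Gamma,\nu\Rightarrow\Delta$ (left contraction), and $\vdash^n\Gamma\Rightarrow\alpha,\alpha,\Delta$ implies $\vdash^n\Gamma\Rightarrow\alpha,\Delta$ (right contraction for classical formulas).
   Context: Fix a countably infinite set $\mathsf{Prop}$ of propositional variables. Classical formulas are generated by $\alpha ::= p \mid \bot \mid \neg\alpha \mid \alpha\wedge\alpha \mid \alpha\vee\alpha$ with $p\in\mathsf{Prop}$. Formulas are generated by $\phi ::= \alpha \mid \phi\wedge\phi \mid \phi\vee\phi \mid \phi\mathbin{\backslash\!\!/}\phi$ where $\alpha$ is classical ($\vee$: split disjunction, $\mathbin{\backslash\!\!/}$: inquisitive disjunction). A sequent is $\Gamma\Rightarrow\Delta$ with $\Gamma,\Delta$ finite multisets of formulas; "$\Gamma,\Delta$" denotes multiset union. Deep-inference notation: for a formula $\chi$ with a designated occurrence of a subformula not in the scope of any negation, $\chi\{\eta\}$ denotes the result of replacing that occurrence by $\eta$. The cut-free calculus $\mathsf{GT}^-$ ($\alpha$ ranges over classical formulas, $\Lambda$ over multisets of classical formulas): axioms $\Gamma,p\Rightarrow p,\Delta$ and $\Gamma,\bot\Rightarrow\Delta$; (L$\neg$) from $\Gamma\Rightarrow\alpha,\Delta$ infer $\Gamma,\neg\alpha\Rightarrow\Delta$; (R$\neg$) from $\Gamma,\alpha\Rightarrow\Delta$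 infer $\Gamma\Rightarrow\neg\alpha,\Delta$; (L$\wedge$) from $\Gamma,\phi,\psi\Rightarrow\Delta$ infer $\Gamma,\phi\wedge\psi\Rightarrow\Delta$; (R$\wedge$) from $\Gamma\Rightarrow\phi,\Lambda$ and $\Gamma\Rightarrow\psi,\Lambda$ infer $\Gamma\Rightarrow\phi\wedge\psi,\Lambda,\Delta$; (L$\vee$) from $\Gamma,\phi\Rightarrow\Lambda$ and $\Gamma,\psi\Rightarrow\Lambda$ infer $\Gamma,\phi\vee\psi\Rightarrow\Lambda,\Delta$; (R$\vee$) from $\Gamma\Rightarrow\phi,\psi,\Delta$ infer $\Gamma\Rightarrow\phi\vee\psi,\Delta$; (L$\mathbin{\backslash\!\!/}$) from $\Gamma,\chi\{\phi_L\}\Rightarrow\Delta$ and $\Gamma,\chi\{\phi_R\}\Rightarrow\Delta$ infer $\Gamma,\chi\{\phi_L\mathbin{\backslash\!\!/}\phi_R\}\Rightarrow\Delta$; (R$\mathbin{\backslash\!\!/}$) from $\Gamma\Rightarrow\chi\{\phi_i\},\Delta$ ($i\in\{L,R\}$) infer $\Gamma\Rightarrow\chi\{\phi_L\mathbin{\backslash\!\!/}\phi_R\},\Delta$. The height of a derivation consisting of a single axiom is $1$; otherwise it is $1$ plus the maximum height of the subderivations of the premises of its last rule. $\vdash^n\Gamma\Rightarrow\Delta$ means there is a $\mathsf{GT}^-$-derivation of $\Gamma\Rightarrow\Delta$ of height at most $n$. *)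

theory Defs
  imports Main "HOL-Library.Multiset"
begin

text \<open>The single datatype contains all syntax trees; the
predicates classical/wff carve out the classical formulas and the formulas of
the paper (negation only applied to classical formulas).\<close>

datatype fm =
    Atom nat
  | Bot
  | Neg fm
  | Conj fm fm
  | Disj fm fm
  | IDisj fm fm

fun classical :: "fm \<Rightarrow> bool" where
  "classical (Atom p) = True"
| "classical Bot = True"
| "classical (Neg a) = classical a"
| "classical (Conj a b) = (classical a \<and> classical b)"
| "classical (Disj a b) = (classical a \<and> classical b)"
| "classical (IDisj a b) = False"

fun wff :: "fm \<Rightarrow> bool" where
  "wff (Atom p) = True"
| "wff Bot = True"
| "wff (Neg a) = classical a"
| "wff (Conj a b) = (wff a \<and> wff b)"
| "wff (Disj a b) = (wff a \<and> wff b)"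
| "wff (IDisj a b) = (wff a \<and> wff b)"

text \<open>Deep-inference contexts: a formula with one designated hole that is
not in the scope of any negation.\<close>

datatype ctx =
    Hole
  | CConjL ctx fm | CConjR fm ctx
  | CDisjL ctx fm | CDisjR fm ctx
  | CIDisjL ctx fm | CIDisjR fm ctx

fun plug :: "ctx \<Rightarrow> fm \<Rightarrow> fm" where
  "plug Hole e = e"
| "plug (CConjL c f) e = Conj (plug c e) f"
| "plug (CConjR f c) e = Conj f (plug c e)"
| "plug (CDisjL c f) e = Disj (plug c e) f"
| "plug (CDisjR f c) e = Disj f (plug c e)"
| "plug (CIDisjL c f) e = IDisj (plug c e) f"
| "plug (CIDisjR f c) e = IDisj f (plug c e)"

text \<open>derh n \<Gamma> \<Delta>: there is a GT^- derivation of \<Gamma> \<Rightarrow> \<Delta> of height exactly n.\<close>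

inductive derh :: "nat \<Rightarrow> fm multiset \<Rightarrow> fm multiset \<Rightarrow> bool" where
  ax_atom: "derh 1 (add_mset (Atom p) \<Gamma>) (add_mset (Atom p) \<Delta>)"
| ax_bot: "derh 1 (add_mset Bot \<Gamma>) \<Delta>"
| L_neg: "classical a \<Longrightarrow> derh n \<Gamma> (add_mset a \<Delta>) \<Longrightarrow>
           derh (Suc n) (add_mset (Neg a) \<Gamma>) \<Delta>"
| R_neg: "classical a \<Longrightarrow> derh n (add_mset a \<Gamma>) \<Delta> \<Longrightarrow>
           derh (Suc n) \<Gamma> (add_mset (Neg a) \<Delta>)"
| L_conj: "derh n (add_mset f (add_mset g \<Gamma>)) \<Delta> \<Longrightarrow>
           derh (Suc n) (add_mset (Conj f g) \<Gamma>) \<Delta>"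
| R_conj: "\<forall>a\<in>#\<Lambda>. classical a \<Longrightarrow>
           derh n1 \<Gamma> (add_mset f \<Lambda>) \<Longrightarrow> derh n2 \<Gamma> (add_mset g \<Lambda>) \<Longrightarrow>
           derh (Suc (max n1 n2)) \<Gamma> (add_mset (Conj f g) (\<Lambda> + \<Delta>))"
| L_disj: "\<forall>a\<in>#\<Lambda>. classical a \<Longrightarrow>
           derh n1 (add_mset f \<Gamma>) \<Lambda> \<Longrightarrow> derh n2 (add_mset g \<Gamma>) \<Lambda> \<Longrightarrow>
           derh (Suc (max n1 n2)) (add_mset (Disj f g) \<Gamma>) (\<Lambda> + \<Delta>)"
| R_disj: "derh n \<Gamma> (add_mset f (add_mset g \<Delta>)) \<Longrightarrow>
           derh (Suc n) \<Gamma> (add_mset (Disj f g) \<Delta>)"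
| L_idisj: "derh n1 (add_mset (plug c f) \<Gamma>) \<Delta> \<Longrightarrow> derh n2 (add_mset (plug c g) \<Gamma>) \<Delta> \<Longrightarrow>
           derh (Suc (max n1 n2)) (add_mset (plug c (IDisj f g)) \<Gamma>) \<Delta>"
| R_idisjL: "derh n \<Gamma> (add_mset (plug c f) \<Delta>) \<Longrightarrow>
           derh (Suc n) \<Gamma> (add_mset (plug c (IDisj f g)) \<Delta>)"
| R_idisjR: "derh n \<Gamma> (add_mset (plug c g) \<Delta>) \<Longrightarrow>
           derh (Suc n) \<Gamma> (add_mset (plug c (IDisj f g)) \<Delta>)"

definition derivable :: "nat \<Rightarrow> fm multiset \<Rightarrow> fm multiset \<Rightarrow> bool" where
  "derivable n \<Gamma> \<Delta> \<longleftrightarrow> (\<exists>m\<le>n. derh m \<Gamma> \<Delta>)"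

end

theory Submission
  imports Defs
begin

(* Both contractions are proved together by induction on the height.  If no copy
   of the contracted formula is principal in the last rule, contract in the premises and apply
   the rule again.  If one copy is principal, the premises contain the formulas the rule
   decomposed it into, next to the other copy; inverting that copy in a height-preserving way
   produces duplicates in derivations of lower height, which the induction hypothesis
   contracts.
   The inversion needed for the inquisitive disjunction on the left is the replacement of an
   inquisitive disjunction at an arbitrary position (not under negation) by one of its
   disjuncts.  It is proved for all positions at once, which works because two such
   replacements at different positions commute (ired_plug_IDisj_residual).
   On the right only classical formulas are contracted: the right rule for the inquisitive
   disjunction is not invertible, and the rules with a classical context Lambda keep
   classical formulas only. *)

lemma add_mset_eq_union_cases:
  assumes "add_mset x M = P + Q"
  obtains P' where "P = add_mset x P'" "M = P' + Q" | Q' where "Q = add_mset x Q'" "M = P + Q'"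
proof -
  from assms have "x \<in># P + Q" by (metis union_single_eq_member)
  then show thesis
    using assms that by (auto dest!: multi_member_split)
qed

lemma add_mset_eq_double_cases:
  assumes "add_mset \<chi> M = add_mset \<nu> (add_mset \<nu> N)"
  obtains "\<chi> = \<nu>" "M = add_mset \<nu> N" | K where "M = add_mset \<nu> (add_mset \<nu> K)" "N = add_mset \<chi> K"
  using assms by (auto simp: add_eq_conv_ex)

lemma double_eq_union_cases:
  assumes "add_mset x (add_mset x M) = P + Q"
  obtains P' where "P = add_mset x (add_mset x P')" "M = P' + Q"
  | Q' where "Q = add_mset x Q'" "add_mset x M = P + Q'"
  using assms
proof (cases rule: add_mset_eq_union_cases)
  case (1 P1)
  from 1(2) show thesis
    by (cases rule: add_mset_eq_union_cases) (use 1(1) that in auto)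
qed (use that in auto)

section \<open>Height-bounded derivability\<close>

lemma derh_weaken: "derh n \<Gamma> \<Delta> \<Longrightarrow> derh n (\<Gamma> + A) (\<Delta> + B)"
proof (induction arbitrary: A B rule: derh.induct)
  case (R_conj \<Lambda> n1 \<Gamma> f n2 g \<Delta>)
  from derh.R_conj[OF R_conj.hyps(1) R_conj.IH[of A "{#}", simplified], of "\<Delta> + B"]
  show ?case by (simp add: add.assoc)
next
  case (L_disj \<Lambda> n1 f \<Gamma> n2 g \<Delta>)
  from derh.L_disj[OF L_disj.hyps(1) L_disj.IH[of A "{#}", simplified], of "\<Delta> + B"]
  show ?case by (simp add: add.assoc)
next
  case (L_idisj n1 c f \<Gamma> \<Delta> n2 g)
  from derh.L_idisj[OF L_idisj.IH[of A B, simplified]] show ?case by simp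
qed (auto intro: derh.intros simp del: One_nat_def)

lemma derivableI: "derh m \<Gamma> \<Delta> \<Longrightarrow> m \<le> n \<Longrightarrow> derivable n \<Gamma> \<Delta>"
  unfolding derivable_def by blast

lemma derivable_mono: "derivable m \<Gamma> \<Delta> \<Longrightarrow> m \<le> n \<Longrightarrow> derivable n \<Gamma> \<Delta>"
  unfolding derivable_def by (meson order_trans)

lemma derivable_weaken: "derivable n \<Gamma> \<Delta> \<Longrightarrow> derivable n (\<Gamma> + A) (\<Delta> + B)"
  unfolding derivable_def using derh_weaken by blast

lemma derivable_ax_atom: "Atom p \<in># \<Gamma> \<Longrightarrow> Atom p \<in># \<Delta> \<Longrightarrow> 1 \<le> n \<Longrightarrow> derivable n \<Gamma> \<Delta>"
  by (metis derivableI ax_atom multi_member_split)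

lemma derivable_ax_bot: "Bot \<in># \<Gamma> \<Longrightarrow> 1 \<le> n \<Longrightarrow> derivable n \<Gamma> \<Delta>"
  by (metis derivableI ax_bot multi_member_split)

lemma derivable_L_neg:
  "classical a \<Longrightarrow> derivable n \<Gamma> (add_mset a \<Delta>) \<Longrightarrow> derivable (Suc n) (add_mset (Neg a) \<Gamma>) \<Delta>"
  unfolding derivable_def using L_neg by fastforce

lemma derivable_R_neg:
  "classical a \<Longrightarrow> derivable n (add_mset a \<Gamma>) \<Delta> \<Longrightarrow> derivable (Suc n) \<Gamma> (add_mset (Neg a) \<Delta>)"
  unfolding derivable_def using R_neg by fastforce

lemma derivable_L_conj:
  "derivable n (add_mset f (add_mset g \<Gamma>)) \<Delta> \<Longrightarrow> derivable (Suc n) (add_mset (Conj f g) \<Gamma>) \<Delta>"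
  unfolding derivable_def using L_conj by fastforce

lemma derivable_R_conj:
  assumes "\<forall>a\<in>#\<Lambda>. classical a"
    and "derivable n1 \<Gamma> (add_mset f \<Lambda>)" and "derivable n2 \<Gamma> (add_mset g \<Lambda>)"
  shows "derivable (Suc (max n1 n2)) \<Gamma> (add_mset (Conj f g) (\<Lambda> + \<Delta>))"
proof -
  obtain m1 m2 where "m1 \<le> n1" "derh m1 \<Gamma> (add_mset f \<Lambda>)" and "m2 \<le> n2" "derh m2 \<Gamma> (add_mset g \<Lambda>)"
    using assms unfolding derivable_def by blast
  with assms(1) show ?thesis
    by (intro derivableI[OF R_conj]) auto
qed

lemma derivable_L_disj:
  assumes "\<forall>a\<in>#\<Lambda>. classical a"
    and "derivable n1 (add_mset f \<Gamma>) \<Lambda>" and "derivable n2 (add_mset g \<Gamma>) \<Lambda>"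
  shows "derivable (Suc (max n1 n2)) (add_mset (Disj f g) \<Gamma>) (\<Lambda> + \<Delta>)"
proof -
  obtain m1 m2 where "m1 \<le> n1" "derh m1 (add_mset f \<Gamma>) \<Lambda>" and "m2 \<le> n2" "derh m2 (add_mset g \<Gamma>) \<Lambda>"
    using assms unfolding derivable_def by blast
  with assms(1) show ?thesis
    by (intro derivableI[OF L_disj]) auto
qed

lemma derivable_R_disj:
  "derivable n \<Gamma> (add_mset f (add_mset g \<Delta>)) \<Longrightarrow> derivable (Suc n) \<Gamma> (add_mset (Disj f g) \<Delta>)"
  unfolding derivable_def using R_disj by fastforce

lemma derivable_L_idisj:
  assumes "derivable n1 (add_mset (plug c f) \<Gamma>) \<Delta>" and "derivable n2 (add_mset (plug c g) \<Gamma>) \<Delta>"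
  shows "derivable (Suc (max n1 n2)) (add_mset (plug c (IDisj f g)) \<Gamma>) \<Delta>"
proof -
  obtain m1 m2 where "m1 \<le> n1" "derh m1 (add_mset (plug c f) \<Gamma>) \<Delta>"
    and "m2 \<le> n2" "derh m2 (add_mset (plug c g) \<Gamma>) \<Delta>"
    using assms unfolding derivable_def by blast
  then show ?thesis
    by (intro derivableI[OF L_idisj]) auto
qed

lemma derivable_R_idisj:
  "derivable n \<Gamma> (add_mset (plug c h) \<Delta>) \<Longrightarrow> h = f \<or> h = g \<Longrightarrow>
    derivable (Suc n) \<Gamma> (add_mset (plug c (IDisj f g)) \<Delta>)"
  unfolding derivable_def using R_idisjL R_idisjR by fastforce

section \<open>Replacing an inquisitive disjunction by one of its disjuncts\<close>

lemma plug_IDisj_not_classical: "\<not> classical (plug c (IDisj f g))"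
  by (induction c) auto

inductive ired :: "fm \<Rightarrow> fm \<Rightarrow> bool" where
  pick_left: "ired (IDisj f g) f"
| pick_right: "ired (IDisj f g) g"
| ConjL: "ired f f' \<Longrightarrow> ired (Conj f g) (Conj f' g)"
| ConjR: "ired g g' \<Longrightarrow> ired (Conj f g) (Conj f g')"
| DisjL: "ired f f' \<Longrightarrow> ired (Disj f g) (Disj f' g)"
| DisjR: "ired g g' \<Longrightarrow> ired (Disj f g) (Disj f g')"
| IDisjL: "ired f f' \<Longrightarrow> ired (IDisj f g) (IDisj f' g)"
| IDisjR: "ired g g' \<Longrightarrow> ired (IDisj f g) (IDisj f g')"

inductive_cases ired_AtomE: "ired (Atom p) \<psi>"
inductive_cases ired_BotE: "ired Bot \<psi>"
inductive_cases ired_NegE: "ired (Neg a) \<psi>"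
inductive_cases ired_ConjE: "ired (Conj f g) \<psi>"
inductive_cases ired_DisjE: "ired (Disj f g) \<psi>"

lemma ired_plug_IDisj: "h = f \<or> h = g \<Longrightarrow> ired (plug c (IDisj f g)) (plug c h)"
  by (induction c) (auto intro: ired.intros)

(* Critical-pair analysis for a step from plug c (IDisj f g) to psi: the redex at c is either
   already resolved in psi, or it survives as a residual at some position c'. *)
definition ired_residual :: "ctx \<Rightarrow> fm \<Rightarrow> fm \<Rightarrow> fm \<Rightarrow> bool" where
  "ired_residual c f g \<psi> \<longleftrightarrow> ired\<^sup>=\<^sup>= (plug c f) \<psi> \<or> ired\<^sup>=\<^sup>= (plug c g) \<psi> \<or>
    (\<exists>c' f' g'. \<psi> = plug c' (IDisj f' g') \<and>
       ired\<^sup>=\<^sup>= (plug c f) (plug c' f') \<and> ired\<^sup>=\<^sup>= (plug c g) (plug c' g'))"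

lemma ired_residual_cong:
  assumes "ired_residual c f g \<psi>"
    and K: "\<And>x y. ired x y \<Longrightarrow> ired (K x) (K y)" and C: "\<And>c x. plug (C c) x = K (plug c x)"
  shows "ired_residual (C c) f g (K \<psi>)"
proof -
  have K': "ired\<^sup>=\<^sup>= (K x) (K y)" if "ired\<^sup>=\<^sup>= x y" for x y
    using that K by auto
  from assms(1) consider "ired\<^sup>=\<^sup>= (plug c f) \<psi>" | "ired\<^sup>=\<^sup>= (plug c g) \<psi>"
    | c' f' g' where "\<psi> = plug c' (IDisj f' g')"
        "ired\<^sup>=\<^sup>= (plug c f) (plug c' f')" "ired\<^sup>=\<^sup>= (plug c g) (plug c' g')"
    unfolding ired_residual_def by blast
  then show ?thesis
  proof cases
    case (3 c' f' g')
    then show ?thesis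
      unfolding ired_residual_def using K'[OF 3(2)] K'[OF 3(3)]
      by (intro disjI2 exI[of _ "C c'"] exI[of _ f'] exI[of _ g']) (simp add: C)
  qed (use K in \<open>auto simp: ired_residual_def C\<close>)
qed

lemma ired_residual_step:
  assumes K: "\<And>x. ired (K x b) (K x b')" and C: "\<And>c x b. plug (C c b) x = K (plug c x) b"
  shows "ired_residual (C c b) f g (K (plug c (IDisj f g)) b')"
  unfolding ired_residual_def
  by (rule disjI2, rule disjI2, rule exI[of _ "C c b'"], rule exI[of _ f], rule exI[of _ g])
    (simp add: C K)

lemma ired_plug_IDisj_residual:
  "ired (plug c (IDisj f g)) \<psi> \<Longrightarrow> ired_residual c f g \<psi>"
proof (induction c arbitrary: \<psi>)
  case Hole
  then show ?case
    unfolding ired_residual_def by (cases rule: ired.cases) (fastforce intro: exI[of _ Hole])+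
next
  case (CConjL c b)
  from CConjL.prems show ?case
    by (cases rule: ired.cases)
      (auto intro: ired_residual_cong[OF CConjL.IH, where C="\<lambda>c. CConjL c b"]
        ired_residual_step[where C=CConjL and K=Conj] ired.intros)
next
  case (CConjR b c)
  from CConjR.prems show ?case
    by (cases rule: ired.cases)
      (auto intro: ired_residual_cong[OF CConjR.IH, where C="CConjR b"]
        ired_residual_step[where C="\<lambda>c b. CConjR b c" and K="\<lambda>x b. Conj b x"] ired.intros)
next
  case (CDisjL c b)
  from CDisjL.prems show ?case
    by (cases rule: ired.cases)
      (auto intro: ired_residual_cong[OF CDisjL.IH, where C="\<lambda>c. CDisjL c b"]
        ired_residual_step[where C=CDisjL and K=Disj] ired.intros)
next
  case (CDisjR b c)
  from CDisjR.prems show ?case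
    by (cases rule: ired.cases)
      (auto intro: ired_residual_cong[OF CDisjR.IH, where C="CDisjR b"]
        ired_residual_step[where C="\<lambda>c b. CDisjR b c" and K="\<lambda>x b. Disj b x"] ired.intros)
next
  case (CIDisjL c b)
  from CIDisjL.prems show ?case
    by (cases rule: ired.cases)
      (auto intro: ired_residual_cong[OF CIDisjL.IH, where C="\<lambda>c. CIDisjL c b"]
        ired_residual_step[where C=CIDisjL and K=IDisj] ired.intros,
       auto simp: ired_residual_def intro: ired.intros)
next
  case (CIDisjR b c)
  from CIDisjR.prems show ?case
    by (cases rule: ired.cases)
      (auto intro: ired_residual_cong[OF CIDisjR.IH, where C="CIDisjR b"]
        ired_residual_step[where C="\<lambda>c b. CIDisjR b c" and K="\<lambda>x b. IDisj b x"] ired.intros,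
       auto simp: ired_residual_def intro: ired.intros)
qed

section \<open>Height-preserving invertibility\<close>

inductive left_inversion :: "fm \<Rightarrow> fm multiset \<Rightarrow> fm multiset \<Rightarrow> bool" where
  Neg: "classical a \<Longrightarrow> left_inversion (Neg a) {#} {#a#}"
| Conj: "left_inversion (Conj f g) {#f, g#} {#}"
| DisjL: "left_inversion (Disj f g) {#f#} {#}"
| DisjR: "left_inversion (Disj f g) {#g#} {#}"
| ired: "ired \<phi> \<psi> \<Longrightarrow> left_inversion \<phi> {#\<psi>#} {#}"

lemma left_inversion_classical: "left_inversion \<phi> A B \<Longrightarrow> \<forall>b\<in>#B. classical b"
  by (induction rule: left_inversion.induct) auto

lemma left_inversion_Atom: "\<not> left_inversion (Atom p) A B"
  and left_inversion_Bot: "\<not> left_inversion Bot A B"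
  by (auto elim: left_inversion.cases ired_AtomE ired_BotE)

lemma left_inversion_plug_IDisjE:
  assumes "left_inversion (plug c (IDisj f g)) A B"
  obtains "B = {#}" "A = {#plug c f#} \<or> left_inversion (plug c f) A {#}"
  | "B = {#}" "A = {#plug c g#} \<or> left_inversion (plug c g) A {#}"
  | c' f' g' A' where "B = {#}" "A = add_mset (plug c' (IDisj f' g')) A'"
      "add_mset (plug c' f') A' = {#plug c f#}
        \<or> left_inversion (plug c f) (add_mset (plug c' f') A') {#}"
      "add_mset (plug c' g') A' = {#plug c g#}
        \<or> left_inversion (plug c g) (add_mset (plug c' g') A') {#}"
  using assms
proof (cases rule: left_inversion.cases)
  case (Neg a)
  then show thesis by (cases c) auto
next
  case (Conj x y)
  then consider c0 where "c = CConjL c0 y" "x = plug c0 (IDisj f g)"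
    | c0 where "c = CConjR x c0" "y = plug c0 (IDisj f g)"
    by (cases c) auto
  then show thesis
  proof cases
    case (1 c0)
    show thesis
      by (rule that(3)[of c0 f g "{#y#}"]) (use Conj 1 in \<open>auto intro: left_inversion.Conj\<close>)
  next
    case (2 c0)
    show thesis
      by (rule that(3)[of c0 f g "{#x#}"])
        (use Conj 2 in \<open>auto intro: left_inversion.Conj[of x, unfolded add_mset_commute[of x]]\<close>)
  qed
next
  case (DisjL x y)
  then show thesis
    using that(1,3) by (cases c) (auto intro: left_inversion.DisjL)
next
  case (DisjR x y)
  then show thesis
    using that(1,3) by (cases c) (auto intro: left_inversion.DisjR)
next
  case (ired \<psi>)
  then have "ired_residual c f g \<psi>"
    by (simp add: ired_plug_IDisj_residual)
  then consider "ired\<^sup>=\<^sup>= (plug c f) \<psi>" | "ired\<^sup>=\<^sup>= (plug c g) \<psi>"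
    | c' f' g' where "\<psi> = plug c' (IDisj f' g')"
        "ired\<^sup>=\<^sup>= (plug c f) (plug c' f')" "ired\<^sup>=\<^sup>= (plug c g) (plug c' g')"
    unfolding ired_residual_def by blast
  then show thesis
  proof cases
    case (3 c' f' g')
    show thesis
      by (rule that(3)[of c' f' g' "{#}"]) (use ired 3 in \<open>auto intro: left_inversion.ired\<close>)
  qed (use ired that(1,2) in \<open>auto intro: left_inversion.ired\<close>)
qed

definition left_invertible :: "nat \<Rightarrow> fm multiset \<Rightarrow> fm multiset \<Rightarrow> bool" where
  "left_invertible n \<Gamma> \<Delta> \<longleftrightarrow>
    (\<forall>\<phi> \<Gamma>' A B. \<Gamma> = add_mset \<phi> \<Gamma>' \<longrightarrow> left_inversion \<phi> A B \<longrightarrow> derivable n (\<Gamma>' + A) (\<Delta> + B))"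

lemma left_invertibleD:
  "left_invertible n (add_mset \<phi> \<Gamma>) \<Delta> \<Longrightarrow> left_inversion \<phi> A B \<Longrightarrow> derivable n (\<Gamma> + A) (\<Delta> + B)"
  unfolding left_invertible_def by blast

lemma left_invertibleI:
  assumes principal: "\<And>A B. left_inversion \<chi> A B \<Longrightarrow> derivable n (\<Gamma> + A) (\<Delta> + B)"
    and side: "\<And>\<phi> \<Gamma>' A B. \<Gamma> = add_mset \<phi> \<Gamma>' \<Longrightarrow> left_inversion \<phi> A B \<Longrightarrow>
      derivable n (add_mset \<chi> \<Gamma>' + A) (\<Delta> + B)"
  shows "left_invertible n (add_mset \<chi> \<Gamma>) \<Delta>"
  unfolding left_invertible_def
proof (intro allI impI)
  fix \<phi> \<Gamma>' A B assume "add_mset \<chi> \<Gamma> = add_mset \<phi> \<Gamma>'" and inv: "left_inversion \<phi> A B"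
  then consider "\<phi> = \<chi>" "\<Gamma>' = \<Gamma>" | K where "\<Gamma> = add_mset \<phi> K" "\<Gamma>' = add_mset \<chi> K"
    by (auto simp: add_eq_conv_ex)
  then show "derivable n (\<Gamma>' + A) (\<Delta> + B)"
    by cases (use inv principal side in simp_all)
qed

lemma left_invertible_right_rule:
  assumes "left_invertible n (X + \<Gamma>) \<Delta>"
    and "\<And>\<Gamma>' B. derivable n (X + \<Gamma>') (\<Delta> + B) \<Longrightarrow> \<forall>b\<in>#B. classical b \<Longrightarrow> derivable m \<Gamma>' (\<Delta>' + B)"
  shows "left_invertible m \<Gamma> \<Delta>'"
  unfolding left_invertible_def
proof (intro allI impI)
  fix \<phi> \<Gamma>' A B assume "\<Gamma> = add_mset \<phi> \<Gamma>'" and inv: "left_inversion \<phi> A B"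
  then have "X + \<Gamma> = add_mset \<phi> (X + \<Gamma>')" by simp
  from left_invertibleD[OF assms(1)[unfolded this] inv]
  have "derivable n (X + (\<Gamma>' + A)) (\<Delta> + B)" by (simp add: add.assoc)
  with assms(2) left_inversion_classical[OF inv] show "derivable m (\<Gamma>' + A) (\<Delta>' + B)"
    by blast
qed

lemma left_invertible_L_neg:
  assumes "classical a" and "derh n \<Gamma> (add_mset a \<Delta>)" and IH: "left_invertible n \<Gamma> (add_mset a \<Delta>)"
  shows "left_invertible (Suc n) (add_mset (Neg a) \<Gamma>) \<Delta>"
proof (rule left_invertibleI)
  fix A B assume "left_inversion (Neg a) A B"
  then have "A = {#}" "B = {#a#}"
    by (auto elim: left_inversion.cases ired_NegE)
  with assms(2) show "derivable (Suc n) (\<Gamma> + A) (\<Delta> + B)"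
    by (auto intro: derivableI)
next
  fix \<phi> \<Gamma>' A B assume "\<Gamma> = add_mset \<phi> \<Gamma>'" "left_inversion \<phi> A B"
  with IH have "derivable n (\<Gamma>' + A) (add_mset a (\<Delta> + B))"
    by (auto dest: left_invertibleD)
  with assms(1) show "derivable (Suc n) (add_mset (Neg a) \<Gamma>' + A) (\<Delta> + B)"
    by (auto intro: derivable_L_neg)
qed

lemma left_invertible_L_conj:
  assumes "derh n (add_mset f (add_mset g \<Gamma>)) \<Delta>"
    and IH: "left_invertible n (add_mset f (add_mset g \<Gamma>)) \<Delta>"
  shows "left_invertible (Suc n) (add_mset (Conj f g) \<Gamma>) \<Delta>"
proof (rule left_invertibleI)
  fix A B assume "left_inversion (Conj f g) A B"
  then consider "A = {#f, g#}" "B = {#}" | f' where "ired f f'" "A = {#Conj f' g#}" "B = {#}"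
    | g' where "ired g g'" "A = {#Conj f g'#}" "B = {#}"
    by (auto elim!: left_inversion.cases ired_ConjE)
  then show "derivable (Suc n) (\<Gamma> + A) (\<Delta> + B)"
  proof cases
    case 1
    with assms(1) show ?thesis by (auto intro: derivableI)
  next
    case (2 f')
    from left_invertibleD[OF IH left_inversion.ired[OF 2(1)]]
    have "derivable n (add_mset f' (add_mset g \<Gamma>)) \<Delta>" by simp
    with 2 show ?thesis by (auto intro: derivable_L_conj)
  next
    case (3 g')
    from left_invertibleD[OF IH[unfolded add_mset_commute[of f g]] left_inversion.ired[OF 3(1)]]
    have "derivable n (add_mset f (add_mset g' \<Gamma>)) \<Delta>" by (simp add: add_mset_commute)
    with 3 show ?thesis by (auto intro: derivable_L_conj)
  qed
next
  fix \<phi> \<Gamma>' A B assume "\<Gamma> = add_mset \<phi> \<Gamma>'" "left_inversion \<phi> A B"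
  with IH have "derivable n (add_mset f (add_mset g (\<Gamma>' + A))) (\<Delta> + B)"
    using left_invertibleD[of n \<phi> "add_mset f (add_mset g \<Gamma>')"] by (simp add: add_mset_commute)
  then show "derivable (Suc n) (add_mset (Conj f g) \<Gamma>' + A) (\<Delta> + B)"
    by (auto intro: derivable_L_conj)
qed

lemma left_invertible_L_disj:
  assumes cl: "\<forall>a\<in>#\<Lambda>. classical a"
    and "derh n1 (add_mset f \<Gamma>) \<Lambda>" and IH1: "left_invertible n1 (add_mset f \<Gamma>) \<Lambda>"
    and "derh n2 (add_mset g \<Gamma>) \<Lambda>" and IH2: "left_invertible n2 (add_mset g \<Gamma>) \<Lambda>"
  shows "left_invertible (Suc (max n1 n2)) (add_mset (Disj f g) \<Gamma>) (\<Lambda> + \<Delta>)"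
proof (rule left_invertibleI)
  have prem1: "derivable n1 (add_mset f \<Gamma>) \<Lambda>" and prem2: "derivable n2 (add_mset g \<Gamma>) \<Lambda>"
    using assms(2,4) by (auto intro: derivableI)
  fix A B assume inv: "left_inversion (Disj f g) A B"
  then have "B = {#}"
    by (cases rule: left_inversion.cases) auto
  from inv consider "A = {#f#}" | "A = {#g#}" | f' where "ired f f'" "A = {#Disj f' g#}"
    | g' where "ired g g'" "A = {#Disj f g'#}"
    by (auto elim!: left_inversion.cases ired_DisjE)
  then show "derivable (Suc (max n1 n2)) (\<Gamma> + A) (\<Lambda> + \<Delta> + B)"
  proof cases
    case 1
    with derivable_weaken[OF prem1, of "{#}" \<Delta>] \<open>B = {#}\<close> show ?thesis
      by (auto intro: derivable_mono)
  next
    case 2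
    with derivable_weaken[OF prem2, of "{#}" \<Delta>] \<open>B = {#}\<close> show ?thesis
      by (auto intro: derivable_mono)
  next
    case (3 f')
    from left_invertibleD[OF IH1 left_inversion.ired[OF 3(1)]]
    have "derivable n1 (add_mset f' \<Gamma>) \<Lambda>" by simp
    from derivable_L_disj[OF cl this prem2] 3 \<open>B = {#}\<close> show ?thesis by simp
  next
    case (4 g')
    from left_invertibleD[OF IH2 left_inversion.ired[OF 4(1)]]
    have "derivable n2 (add_mset g' \<Gamma>) \<Lambda>" by simp
    from derivable_L_disj[OF cl prem1 this] 4 \<open>B = {#}\<close> show ?thesis by simp
  qed
next
  fix \<phi> \<Gamma>' A B assume \<Gamma>: "\<Gamma> = add_mset \<phi> \<Gamma>'" and inv: "left_inversion \<phi> A B"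
  have "derivable n1 (add_mset f \<Gamma>' + A) (\<Lambda> + B)"
    using left_invertibleD[OF IH1[unfolded \<Gamma> add_mset_commute[of f]] inv] .
  moreover have "derivable n2 (add_mset g \<Gamma>' + A) (\<Lambda> + B)"
    using left_invertibleD[OF IH2[unfolded \<Gamma> add_mset_commute[of g]] inv] .
  moreover have "\<forall>a\<in>#\<Lambda> + B. classical a"
    using cl left_inversion_classical[OF inv] by auto
  ultimately have "derivable (Suc (max n1 n2)) (add_mset (Disj f g) (\<Gamma>' + A)) (\<Lambda> + B + \<Delta>)"
    by (intro derivable_L_disj) simp_all
  then show "derivable (Suc (max n1 n2)) (add_mset (Disj f g) \<Gamma>' + A) (\<Lambda> + \<Delta> + B)"
    by (simp add: ac_simps)
qed

lemma left_invertible_L_idisj: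
  assumes "derh n1 (add_mset (plug c f) \<Gamma>) \<Delta>"
    and IH1: "left_invertible n1 (add_mset (plug c f) \<Gamma>) \<Delta>"
    and "derh n2 (add_mset (plug c g) \<Gamma>) \<Delta>" and IH2: "left_invertible n2 (add_mset (plug c g) \<Gamma>) \<Delta>"
  shows "left_invertible (Suc (max n1 n2)) (add_mset (plug c (IDisj f g)) \<Gamma>) \<Delta>"
proof (rule left_invertibleI)
  have f: "derivable n1 (\<Gamma> + A) \<Delta>" if "A = {#plug c f#} \<or> left_inversion (plug c f) A {#}" for A
    using that assms(1) left_invertibleD[OF IH1, of A "{#}"] by (auto intro: derivableI)
  have g: "derivable n2 (\<Gamma> + A) \<Delta>" if "A = {#plug c g#} \<or> left_inversion (plug c g) A {#}" for A
    using that assms(3) left_invertibleD[OF IH2, of A "{#}"] by (auto intro: derivableI)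
  fix A B assume "left_inversion (plug c (IDisj f g)) A B"
  then show "derivable (Suc (max n1 n2)) (\<Gamma> + A) (\<Delta> + B)"
  proof (cases rule: left_inversion_plug_IDisjE)
    case 1
    with derivable_mono[OF f[OF 1(2)], of "Suc (max n1 n2)"] show ?thesis by simp
  next
    case 2
    with derivable_mono[OF g[OF 2(2)], of "Suc (max n1 n2)"] show ?thesis by simp
  next
    case (3 c' f' g' A')
    from f[OF 3(3)] g[OF 3(4)]
    have "derivable (Suc (max n1 n2)) (add_mset (plug c' (IDisj f' g')) (\<Gamma> + A')) \<Delta>"
      by (intro derivable_L_idisj) simp_all
    with 3 show ?thesis by simp
  qed
next
  fix \<phi> \<Gamma>' A B assume \<Gamma>: "\<Gamma> = add_mset \<phi> \<Gamma>'" and inv: "left_inversion \<phi> A B"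
  have "derivable n1 (add_mset (plug c f) \<Gamma>' + A) (\<Delta> + B)"
    using left_invertibleD[OF IH1[unfolded \<Gamma> add_mset_commute[of "plug c f"]] inv] .
  moreover have "derivable n2 (add_mset (plug c g) \<Gamma>' + A) (\<Delta> + B)"
    using left_invertibleD[OF IH2[unfolded \<Gamma> add_mset_commute[of "plug c g"]] inv] .
  ultimately show "derivable (Suc (max n1 n2)) (add_mset (plug c (IDisj f g)) \<Gamma>' + A) (\<Delta> + B)"
    by (simp add: derivable_L_idisj)
qed

lemma derh_left_invertible: "derh n \<Gamma> \<Delta> \<Longrightarrow> left_invertible n \<Gamma> \<Delta>"
proof (induction rule: derh.induct)
  case (ax_atom p \<Gamma> \<Delta>)
  show ?case
    by (rule left_invertibleI) (auto simp: left_inversion_Atom intro: derivable_ax_atom)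
next
  case (ax_bot \<Gamma> \<Delta>)
  show ?case
    by (rule left_invertibleI) (auto simp: left_inversion_Bot intro: derivable_ax_bot)
next
  case (R_neg a n \<Gamma> \<Delta>)
  from R_neg.IH have "left_invertible n ({#a#} + \<Gamma>) \<Delta>" by simp
  then show ?case
    by (rule left_invertible_right_rule[where X="{#a#}"]) (simp add: R_neg.hyps derivable_R_neg)
next
  case (R_conj \<Lambda> n1 \<Gamma> f n2 g \<Delta>)
  show ?case
    unfolding left_invertible_def
  proof (intro allI impI)
    fix \<phi> \<Gamma>' A B assume "\<Gamma> = add_mset \<phi> \<Gamma>'" and inv: "left_inversion \<phi> A B"
    with R_conj.IH have "derivable n1 (\<Gamma>' + A) (add_mset f (\<Lambda> + B))"
      "derivable n2 (\<Gamma>' + A) (add_mset g (\<Lambda> + B))"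
      by (auto dest: left_invertibleD)
    moreover have "\<forall>a\<in>#\<Lambda> + B. classical a"
      using R_conj.hyps(1) left_inversion_classical[OF inv] by auto
    ultimately have "derivable (Suc (max n1 n2)) (\<Gamma>' + A) (add_mset (Conj f g) (\<Lambda> + B + \<Delta>))"
      by (intro derivable_R_conj) simp_all
    then show "derivable (Suc (max n1 n2)) (\<Gamma>' + A) (add_mset (Conj f g) (\<Lambda> + \<Delta>) + B)"
      by (simp add: ac_simps)
  qed
next
  case (R_disj n \<Gamma> f g \<Delta>)
  from R_disj.IH show ?case
    by (rule left_invertible_right_rule[where X="{#}", simplified]) (simp add: derivable_R_disj)
next
  case (R_idisjL n \<Gamma> c f \<Delta> g)
  from R_idisjL.IH show ?case
    by (rule left_invertible_right_rule[where X="{#}", simplified]) (simp add: derivable_R_idisj)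
next
  case (R_idisjR n \<Gamma> c g \<Delta> f)
  from R_idisjR.IH show ?case
    by (rule left_invertible_right_rule[where X="{#}", simplified]) (simp add: derivable_R_idisj)
qed (simp_all add: left_invertible_L_neg left_invertible_L_conj left_invertible_L_disj
    left_invertible_L_idisj)

lemma derh_left_inversion:
  "derh n (add_mset \<phi> \<Gamma>) \<Delta> \<Longrightarrow> left_inversion \<phi> A B \<Longrightarrow> derivable n (\<Gamma> + A) (\<Delta> + B)"
  by (blast intro: left_invertibleD derh_left_invertible)

inductive right_inversion :: "fm \<Rightarrow> fm multiset \<Rightarrow> fm multiset \<Rightarrow> bool" where
  Neg: "right_inversion (Neg a) {#a#} {#}"
| ConjL: "right_inversion (Conj f g) {#} {#f#}"
| ConjR: "right_inversion (Conj f g) {#} {#g#}"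
| Disj: "right_inversion (Disj f g) {#} {#f, g#}"

lemma right_inversion_classical: "right_inversion \<psi> A B \<Longrightarrow> classical \<psi> \<Longrightarrow> \<forall>b\<in>#B. classical b"
  by (induction rule: right_inversion.induct) auto

lemma right_inversion_Atom: "\<not> right_inversion (Atom p) A B"
  by (auto elim: right_inversion.cases)

definition right_invertible :: "nat \<Rightarrow> fm multiset \<Rightarrow> fm multiset \<Rightarrow> bool" where
  "right_invertible n \<Gamma> \<Delta> \<longleftrightarrow>
    (\<forall>\<psi> \<Delta>' A B. \<Delta> = add_mset \<psi> \<Delta>' \<longrightarrow> classical \<psi> \<longrightarrow> right_inversion \<psi> A B \<longrightarrow>
      derivable n (\<Gamma> + A) (\<Delta>' + B))"

lemma right_invertibleD:
  "right_invertible n \<Gamma> (add_mset \<psi> \<Delta>) \<Longrightarrow> classical \<psi> \<Longrightarrow> right_inversion \<psi> A B \<Longrightarrow>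
    derivable n (\<Gamma> + A) (\<Delta> + B)"
  unfolding right_invertible_def by blast

lemma right_invertibleI:
  assumes principal: "\<And>A B. classical \<chi> \<Longrightarrow> right_inversion \<chi> A B \<Longrightarrow> derivable n (\<Gamma> + A) (\<Delta> + B)"
    and side: "\<And>\<psi> \<Delta>' A B. \<Delta> = add_mset \<psi> \<Delta>' \<Longrightarrow> classical \<psi> \<Longrightarrow> right_inversion \<psi> A B \<Longrightarrow>
      derivable n (\<Gamma> + A) (add_mset \<chi> \<Delta>' + B)"
  shows "right_invertible n \<Gamma> (add_mset \<chi> \<Delta>)"
  unfolding right_invertible_def
proof (intro allI impI)
  fix \<psi> \<Delta>' A B
  assume "add_mset \<chi> \<Delta> = add_mset \<psi> \<Delta>'" and inv: "classical \<psi>" "right_inversion \<psi> A B"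
  then consider "\<psi> = \<chi>" "\<Delta>' = \<Delta>" | K where "\<Delta> = add_mset \<psi> K" "\<Delta>' = add_mset \<chi> K"
    by (auto simp: add_eq_conv_ex)
  then show "derivable n (\<Gamma> + A) (\<Delta>' + B)"
    by cases (use inv principal side in simp_all)
qed

lemma right_invertible_left_rule:
  assumes "right_invertible n \<Gamma> (X + \<Delta>)"
    and "\<And>A \<Delta>'. derivable n (\<Gamma> + A) (X + \<Delta>') \<Longrightarrow> derivable m (\<Gamma>' + A) \<Delta>'"
  shows "right_invertible m \<Gamma>' \<Delta>"
  unfolding right_invertible_def
proof (intro allI impI)
  fix \<psi> \<Delta>' A B assume "\<Delta> = add_mset \<psi> \<Delta>'" and inv: "classical \<psi>" "right_inversion \<psi> A B"
  then have "X + \<Delta> = add_mset \<psi> (X + \<Delta>')" by simp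
  from right_invertibleD[OF assms(1)[unfolded this] inv]
  show "derivable m (\<Gamma>' + A) (\<Delta>' + B)"
    by (intro assms(2)) (simp add: add.assoc)
qed

lemma right_invertible_R_neg:
  assumes "classical a" and "derh n (add_mset a \<Gamma>) \<Delta>" and IH: "right_invertible n (add_mset a \<Gamma>) \<Delta>"
  shows "right_invertible (Suc n) \<Gamma> (add_mset (Neg a) \<Delta>)"
proof (rule right_invertibleI)
  fix A B assume "right_inversion (Neg a) A B"
  then have "A = {#a#}" "B = {#}"
    by (auto elim: right_inversion.cases)
  with assms(2) show "derivable (Suc n) (\<Gamma> + A) (\<Delta> + B)"
    by (auto intro: derivableI)
next
  fix \<psi> \<Delta>' A B assume "\<Delta> = add_mset \<psi> \<Delta>'" "classical \<psi>" "right_inversion \<psi> A B"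
  with IH have "derivable n (add_mset a (\<Gamma> + A)) (\<Delta>' + B)"
    by (auto dest: right_invertibleD)
  with assms(1) show "derivable (Suc n) (\<Gamma> + A) (add_mset (Neg a) \<Delta>' + B)"
    by (auto intro: derivable_R_neg)
qed

lemma right_invertible_R_disj:
  assumes "derh n \<Gamma> (add_mset f (add_mset g \<Delta>))"
    and IH: "right_invertible n \<Gamma> (add_mset f (add_mset g \<Delta>))"
  shows "right_invertible (Suc n) \<Gamma> (add_mset (Disj f g) \<Delta>)"
proof (rule right_invertibleI)
  fix A B assume "right_inversion (Disj f g) A B"
  then have "A = {#}" "B = {#f, g#}"
    by (auto elim: right_inversion.cases)
  with assms(1) show "derivable (Suc n) (\<Gamma> + A) (\<Delta> + B)"
    by (auto intro: derivableI simp: add_mset_commute)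
next
  fix \<psi> \<Delta>' A B assume \<Delta>: "\<Delta> = add_mset \<psi> \<Delta>'" and inv: "classical \<psi>" "right_inversion \<psi> A B"
  have "add_mset f (add_mset g \<Delta>) = add_mset \<psi> (add_mset f (add_mset g \<Delta>'))"
    using \<Delta> by (simp add: add_mset_commute)
  from right_invertibleD[OF IH[unfolded this] inv]
  show "derivable (Suc n) (\<Gamma> + A) (add_mset (Disj f g) \<Delta>' + B)"
    by (auto intro: derivable_R_disj)
qed

lemma right_invertible_R_conj:
  assumes cl: "\<forall>a\<in>#\<Lambda>. classical a"
    and "derh n1 \<Gamma> (add_mset f \<Lambda>)" and IH1: "right_invertible n1 \<Gamma> (add_mset f \<Lambda>)"
    and "derh n2 \<Gamma> (add_mset g \<Lambda>)" and IH2: "right_invertible n2 \<Gamma> (add_mset g \<Lambda>)"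
  shows "right_invertible (Suc (max n1 n2)) \<Gamma> (add_mset (Conj f g) (\<Lambda> + \<Delta>))"
proof (rule right_invertibleI)
  have prem1: "derivable n1 \<Gamma> (add_mset f \<Lambda>)" and prem2: "derivable n2 \<Gamma> (add_mset g \<Lambda>)"
    using assms(2,4) by (auto intro: derivableI)
  fix A B assume "right_inversion (Conj f g) A B"
  then consider "A = {#}" "B = {#f#}" | "A = {#}" "B = {#g#}"
    by (auto elim: right_inversion.cases)
  then show "derivable (Suc (max n1 n2)) (\<Gamma> + A) (\<Lambda> + \<Delta> + B)"
  proof cases
    case 1
    with derivable_weaken[OF prem1, of "{#}" \<Delta>] show ?thesis
      by (auto intro: derivable_mono)
  next
    case 2
    with derivable_weaken[OF prem2, of "{#}" \<Delta>] show ?thesis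
      by (auto intro: derivable_mono)
  qed
next
  fix \<psi> \<Delta>' A B assume split: "\<Lambda> + \<Delta> = add_mset \<psi> \<Delta>'" and inv: "classical \<psi>" "right_inversion \<psi> A B"
  from split[symmetric] show "derivable (Suc (max n1 n2)) (\<Gamma> + A) (add_mset (Conj f g) \<Delta>' + B)"
  proof (cases rule: add_mset_eq_union_cases)
    case (1 \<Lambda>')
    have "derivable n1 (\<Gamma> + A) (add_mset f \<Lambda>' + B)"
      using right_invertibleD[OF IH1[unfolded 1(1) add_mset_commute[of f]] inv] .
    moreover have "derivable n2 (\<Gamma> + A) (add_mset g \<Lambda>' + B)"
      using right_invertibleD[OF IH2[unfolded 1(1) add_mset_commute[of g]] inv] .
    moreover have "\<forall>a\<in>#\<Lambda>' + B. classical a"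
      using cl 1(1) right_inversion_classical[OF inv(2,1)] by auto
    ultimately have "derivable (Suc (max n1 n2)) (\<Gamma> + A) (add_mset (Conj f g) (\<Lambda>' + B + \<Delta>))"
      by (intro derivable_R_conj) simp_all
    with 1(2) show ?thesis by (simp add: ac_simps)
  next
    case (2 \<Delta>'')
    have "derivable n1 (\<Gamma> + A) (add_mset f \<Lambda>)" "derivable n2 (\<Gamma> + A) (add_mset g \<Lambda>)"
      using derivable_weaken[OF derivableI[OF assms(2) order_refl], of A "{#}"]
        derivable_weaken[OF derivableI[OF assms(4) order_refl], of A "{#}"] by simp_all
    from derivable_R_conj[OF cl this, of "\<Delta>'' + B"] 2(2) show ?thesis
      by (simp add: ac_simps)
  qed
qed

lemma right_invertible_L_disj:
  assumes cl: "\<forall>a\<in>#\<Lambda>. classical a"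
    and "derh n1 (add_mset f \<Gamma>) \<Lambda>" and IH1: "right_invertible n1 (add_mset f \<Gamma>) \<Lambda>"
    and "derh n2 (add_mset g \<Gamma>) \<Lambda>" and IH2: "right_invertible n2 (add_mset g \<Gamma>) \<Lambda>"
  shows "right_invertible (Suc (max n1 n2)) (add_mset (Disj f g) \<Gamma>) (\<Lambda> + \<Delta>)"
  unfolding right_invertible_def
proof (intro allI impI)
  fix \<psi> \<Delta>' A B assume split: "\<Lambda> + \<Delta> = add_mset \<psi> \<Delta>'" and inv: "classical \<psi>" "right_inversion \<psi> A B"
  from split[symmetric] show "derivable (Suc (max n1 n2)) (add_mset (Disj f g) \<Gamma> + A) (\<Delta>' + B)"
  proof (cases rule: add_mset_eq_union_cases)
    case (1 \<Lambda>')
    have "derivable n1 (add_mset f (\<Gamma> + A)) (\<Lambda>' + B)" "derivable n2 (add_mset g (\<Gamma> + A)) (\<Lambda>' + B)"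
      using right_invertibleD[OF IH1[unfolded 1(1)] inv]
        right_invertibleD[OF IH2[unfolded 1(1)] inv]
      by simp_all
    moreover have "\<forall>a\<in>#\<Lambda>' + B. classical a"
      using cl 1(1) right_inversion_classical[OF inv(2,1)] by auto
    ultimately have "derivable (Suc (max n1 n2)) (add_mset (Disj f g) (\<Gamma> + A)) (\<Lambda>' + B + \<Delta>)"
      by (intro derivable_L_disj) simp_all
    with 1(2) show ?thesis by (simp add: ac_simps)
  next
    case (2 \<Delta>'')
    have "derivable n1 (add_mset f (\<Gamma> + A)) \<Lambda>" "derivable n2 (add_mset g (\<Gamma> + A)) \<Lambda>"
      using derivable_weaken[OF derivableI[OF assms(2) order_refl], of A "{#}"]
        derivable_weaken[OF derivableI[OF assms(4) order_refl], of A "{#}"] by simp_all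
    from derivable_L_disj[OF cl this, of "\<Delta>'' + B"] 2(2) show ?thesis
      by (simp add: ac_simps)
  qed
qed

lemma right_invertible_R_idisj:
  assumes IH: "right_invertible n \<Gamma> (add_mset (plug c h) \<Delta>)" and "h = f \<or> h = g"
  shows "right_invertible (Suc n) \<Gamma> (add_mset (plug c (IDisj f g)) \<Delta>)"
proof (rule right_invertibleI)
  fix \<psi> \<Delta>' A B assume \<Delta>: "\<Delta> = add_mset \<psi> \<Delta>'" and inv: "classical \<psi>" "right_inversion \<psi> A B"
  from right_invertibleD[OF IH[unfolded \<Delta> add_mset_commute[of "plug c h"]] inv]
  show "derivable (Suc n) (\<Gamma> + A) (add_mset (plug c (IDisj f g)) \<Delta>' + B)"
    using assms(2) by (simp add: derivable_R_idisj)
qed (simp add: plug_IDisj_not_classical)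

lemma derh_right_invertible: "derh n \<Gamma> \<Delta> \<Longrightarrow> right_invertible n \<Gamma> \<Delta>"
proof (induction rule: derh.induct)
  case (ax_atom p \<Gamma> \<Delta>)
  show ?case
    by (rule right_invertibleI) (auto simp: right_inversion_Atom intro: derivable_ax_atom)
next
  case (ax_bot \<Gamma> \<Delta>)
  show ?case
    unfolding right_invertible_def by (auto intro: derivable_ax_bot)
next
  case (L_neg a n \<Gamma> \<Delta>)
  from L_neg.IH have "right_invertible n \<Gamma> ({#a#} + \<Delta>)" by simp
  then show ?case
    by (rule right_invertible_left_rule) (simp add: L_neg.hyps derivable_L_neg)
next
  case (L_conj n f g \<Gamma> \<Delta>)
  from L_conj.IH show ?case
    by (rule right_invertible_left_rule[where X="{#}", simplified]) (simp add: derivable_L_conj)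
next
  case (L_idisj n1 c f \<Gamma> \<Delta> n2 g)
  show ?case
    unfolding right_invertible_def
  proof (intro allI impI)
    fix \<psi> \<Delta>' A B assume "\<Delta> = add_mset \<psi> \<Delta>'" "classical \<psi>" "right_inversion \<psi> A B"
    with L_idisj.IH have "derivable n1 (add_mset (plug c f) (\<Gamma> + A)) (\<Delta>' + B)"
        "derivable n2 (add_mset (plug c g) (\<Gamma> + A)) (\<Delta>' + B)"
      by (auto dest: right_invertibleD)
    then show "derivable (Suc (max n1 n2)) (add_mset (plug c (IDisj f g)) \<Gamma> + A) (\<Delta>' + B)"
      by (simp add: derivable_L_idisj)
  qed
next
  case (R_idisjL n \<Gamma> c f \<Delta> g)
  then show ?case by (simp add: right_invertible_R_idisj)
next
  case (R_idisjR n \<Gamma> c g \<Delta> f)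
  then show ?case by (simp add: right_invertible_R_idisj)
qed (simp_all add: right_invertible_R_neg right_invertible_R_conj right_invertible_L_disj
    right_invertible_R_disj)

lemma derh_right_inversion:
  "derh n \<Gamma> (add_mset \<psi> \<Delta>) \<Longrightarrow> classical \<psi> \<Longrightarrow> right_inversion \<psi> A B \<Longrightarrow> derivable n (\<Gamma> + A) (\<Delta> + B)"
  by (blast intro: right_invertibleD derh_right_invertible)

section \<open>Height-preserving contraction\<close>

definition contractible :: "nat \<Rightarrow> fm multiset \<Rightarrow> fm multiset \<Rightarrow> bool" where
  "contractible n \<Gamma> \<Delta> \<longleftrightarrow>
    (\<forall>\<nu> \<Gamma>'. \<Gamma> = add_mset \<nu> (add_mset \<nu> \<Gamma>') \<longrightarrow> derivable n (add_mset \<nu> \<Gamma>') \<Delta>) \<and>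
    (\<forall>\<alpha> \<Delta>'. classical \<alpha> \<longrightarrow> \<Delta> = add_mset \<alpha> (add_mset \<alpha> \<Delta>') \<longrightarrow> derivable n \<Gamma> (add_mset \<alpha> \<Delta>'))"

definition contraction_admissible :: "nat \<Rightarrow> bool" where
  "contraction_admissible n \<longleftrightarrow> (\<forall>\<Gamma> \<Delta>. derivable n \<Gamma> \<Delta> \<longrightarrow> contractible n \<Gamma> \<Delta>)"

lemma contract_left:
  "contraction_admissible n \<Longrightarrow> derivable n (add_mset \<nu> (add_mset \<nu> \<Gamma>)) \<Delta> \<Longrightarrow>
    derivable n (add_mset \<nu> \<Gamma>) \<Delta>"
  unfolding contraction_admissible_def contractible_def by blast

lemma contract_right:
  "contraction_admissible n \<Longrightarrow> classical \<alpha> \<Longrightarrow> derivable n \<Gamma> (add_mset \<alpha> (add_mset \<alpha> \<Delta>)) \<Longrightarrow>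
    derivable n \<Gamma> (add_mset \<alpha> \<Delta>)"
  unfolding contraction_admissible_def contractible_def by blast

lemma contract_inverted_left:
  assumes "contraction_admissible n" and "derh n (add_mset \<chi> (add_mset \<phi> \<Gamma>)) \<Delta>"
    and "left_inversion \<chi> {#\<phi>#} {#}"
  shows "derivable n (add_mset \<phi> \<Gamma>) \<Delta>"
  using derh_left_inversion[OF assms(2,3)] contract_left[OF assms(1)] by simp

lemma contract_inverted_right:
  assumes "contraction_admissible n" and "derh n \<Gamma> (add_mset \<chi> (add_mset \<psi> \<Delta>))"
    and "classical \<chi>" and "right_inversion \<chi> {#} {#\<psi>#}"
  shows "derivable n \<Gamma> (add_mset \<psi> \<Delta>)"
  using derh_right_inversion[OF assms(2-4)] contract_right[OF assms(1)]
    right_inversion_classical[OF assms(4,3)]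
  by simp

lemma contractible_mono: "contractible m \<Gamma> \<Delta> \<Longrightarrow> m \<le> n \<Longrightarrow> contractible n \<Gamma> \<Delta>"
  unfolding contractible_def by (blast intro: derivable_mono)

lemma contractible_initial:
  assumes "\<And>\<Gamma>' \<Delta>'. set_mset \<Gamma>' = set_mset \<Gamma> \<Longrightarrow> set_mset \<Delta>' = set_mset \<Delta> \<Longrightarrow> derivable n \<Gamma>' \<Delta>'"
  shows "contractible n \<Gamma> \<Delta>"
  unfolding contractible_def by (auto intro: assms)

lemma contractible_left_rule:
  assumes adm: "contraction_admissible n" and prem: "derivable n (X + \<Gamma>) (Y + \<Delta>)"
    and rule: "\<And>\<Gamma>0 \<Delta>0. derivable n (X + \<Gamma>0) (Y + \<Delta>0) \<Longrightarrow> derivable m (add_mset \<chi> \<Gamma>0) \<Delta>0"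
    and principal: "\<And>\<Gamma>'. \<Gamma> = add_mset \<chi> \<Gamma>' \<Longrightarrow> derivable m (add_mset \<chi> \<Gamma>') \<Delta>"
  shows "contractible m (add_mset \<chi> \<Gamma>) \<Delta>"
  unfolding contractible_def
proof (intro conjI allI impI)
  fix \<nu> \<Gamma>' assume "add_mset \<chi> \<Gamma> = add_mset \<nu> (add_mset \<nu> \<Gamma>')"
  then show "derivable m (add_mset \<nu> \<Gamma>') \<Delta>"
  proof (cases rule: add_mset_eq_double_cases)
    case (2 K)
    from prem[unfolded 2(1)] have "derivable n (add_mset \<nu> (add_mset \<nu> (X + K))) (Y + \<Delta>)"
      by simp
    from contract_left[OF adm this] have "derivable n (X + add_mset \<nu> K) (Y + \<Delta>)"
      by simp
    from rule[OF this] 2(2) show ?thesis by (simp add: add_mset_commute)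
  qed (use principal in simp)
next
  fix \<alpha> \<Delta>' assume "classical \<alpha>" "\<Delta> = add_mset \<alpha> (add_mset \<alpha> \<Delta>')"
  with prem contract_right[OF adm] have "derivable n (X + \<Gamma>) (Y + add_mset \<alpha> \<Delta>')"
    by simp
  then show "derivable m (add_mset \<chi> \<Gamma>) (add_mset \<alpha> \<Delta>')"
    by (rule rule)
qed

lemma contractible_right_rule:
  assumes adm: "contraction_admissible n" and prem: "derivable n (X + \<Gamma>) (Y + \<Delta>)"
    and rule: "\<And>\<Gamma>0 \<Delta>0. derivable n (X + \<Gamma>0) (Y + \<Delta>0) \<Longrightarrow> derivable m \<Gamma>0 (add_mset \<chi> \<Delta>0)"
    and principal: "\<And>\<Delta>'. classical \<chi> \<Longrightarrow> \<Delta> = add_mset \<chi> \<Delta>' \<Longrightarrow> derivable m \<Gamma> (add_mset \<chi> \<Delta>')"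
  shows "contractible m \<Gamma> (add_mset \<chi> \<Delta>)"
  unfolding contractible_def
proof (intro conjI allI impI)
  fix \<nu> \<Gamma>' assume "\<Gamma> = add_mset \<nu> (add_mset \<nu> \<Gamma>')"
  with prem contract_left[OF adm] have "derivable n (X + add_mset \<nu> \<Gamma>') (Y + \<Delta>)"
    by simp
  then show "derivable m (add_mset \<nu> \<Gamma>') (add_mset \<chi> \<Delta>)"
    by (rule rule)
next
  fix \<alpha> \<Delta>' assume "classical \<alpha>" and eq: "add_mset \<chi> \<Delta> = add_mset \<alpha> (add_mset \<alpha> \<Delta>')"
  from eq show "derivable m \<Gamma> (add_mset \<alpha> \<Delta>')"
  proof (cases rule: add_mset_eq_double_cases)
    case (2 K)
    from prem[unfolded 2(1)] have "derivable n (X + \<Gamma>) (add_mset \<alpha> (add_mset \<alpha> (Y + K)))"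
      by simp
    from contract_right[OF adm \<open>classical \<alpha>\<close> this] have "derivable n (X + \<Gamma>) (Y + add_mset \<alpha> K)"
      by simp
    from rule[OF this] 2(2) show ?thesis by (simp add: add_mset_commute)
  qed (use principal \<open>classical \<alpha>\<close> in simp)
qed

lemma contractible_L_neg:
  assumes adm: "contraction_admissible n" and cl: "classical a" and prem: "derh n \<Gamma> (add_mset a \<Delta>)"
  shows "contractible (Suc n) (add_mset (Neg a) \<Gamma>) \<Delta>"
proof (rule contractible_left_rule[OF adm, where X="{#}" and Y="{#a#}"])
  show "derivable n ({#} + \<Gamma>) ({#a#} + \<Delta>)"
    using derivableI[OF prem order_refl] by simp
  show "derivable (Suc n) (add_mset (Neg a) \<Gamma>0) \<Delta>0"
    if "derivable n ({#} + \<Gamma>0) ({#a#} + \<Delta>0)" for \<Gamma>0 \<Delta>0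
    using derivable_L_neg[OF cl] that by simp
  fix \<Gamma>' assume "\<Gamma> = add_mset (Neg a) \<Gamma>'"
  from derh_left_inversion[OF prem[unfolded this] left_inversion.Neg[OF cl]]
  have "derivable n \<Gamma>' (add_mset a (add_mset a \<Delta>))" by simp
  from derivable_L_neg[OF cl contract_right[OF adm cl this]]
  show "derivable (Suc n) (add_mset (Neg a) \<Gamma>') \<Delta>" .
qed

lemma contractible_R_neg:
  assumes adm: "contraction_admissible n" and cl: "classical a" and prem: "derh n (add_mset a \<Gamma>) \<Delta>"
  shows "contractible (Suc n) \<Gamma> (add_mset (Neg a) \<Delta>)"
proof (rule contractible_right_rule[OF adm, where X="{#a#}" and Y="{#}"])
  show "derivable n ({#a#} + \<Gamma>) ({#} + \<Delta>)"
    using derivableI[OF prem order_refl] by simp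
  show "derivable (Suc n) \<Gamma>0 (add_mset (Neg a) \<Delta>0)"
    if "derivable n ({#a#} + \<Gamma>0) ({#} + \<Delta>0)" for \<Gamma>0 \<Delta>0
    using derivable_R_neg[OF cl] that by simp
  fix \<Delta>' assume "classical (Neg a)" "\<Delta> = add_mset (Neg a) \<Delta>'"
  from derh_right_inversion[OF prem[unfolded this(2)] this(1) right_inversion.Neg]
  have "derivable n (add_mset a (add_mset a \<Gamma>)) \<Delta>'" by simp
  from derivable_R_neg[OF cl contract_left[OF adm this]]
  show "derivable (Suc n) \<Gamma> (add_mset (Neg a) \<Delta>')" .
qed

lemma contractible_L_conj:
  assumes adm: "contraction_admissible n" and prem: "derh n (add_mset f (add_mset g \<Gamma>)) \<Delta>"
  shows "contractible (Suc n) (add_mset (Conj f g) \<Gamma>) \<Delta>"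
proof (rule contractible_left_rule[OF adm, where X="{#f, g#}" and Y="{#}"])
  show "derivable n ({#f, g#} + \<Gamma>) ({#} + \<Delta>)"
    using derivableI[OF prem order_refl] by simp
  show "derivable (Suc n) (add_mset (Conj f g) \<Gamma>0) \<Delta>0"
    if "derivable n ({#f, g#} + \<Gamma>0) ({#} + \<Delta>0)" for \<Gamma>0 \<Delta>0
    using derivable_L_conj that by simp
  fix \<Gamma>' assume "\<Gamma> = add_mset (Conj f g) \<Gamma>'"
  then have "add_mset f (add_mset g \<Gamma>) = add_mset (Conj f g) (add_mset f (add_mset g \<Gamma>'))"
    by (simp add: add_mset_commute)
  from derh_left_inversion[OF prem[unfolded this] left_inversion.Conj]
  have "derivable n (add_mset f (add_mset f (add_mset g (add_mset g \<Gamma>')))) \<Delta>"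
    by (simp add: add_mset_commute)
  from contract_left[OF adm this] have "derivable n (add_mset g (add_mset g (add_mset f \<Gamma>'))) \<Delta>"
    by (simp add: add_mset_commute)
  from contract_left[OF adm this] have "derivable n (add_mset f (add_mset g \<Gamma>')) \<Delta>"
    by (simp add: add_mset_commute)
  then show "derivable (Suc n) (add_mset (Conj f g) \<Gamma>') \<Delta>"
    by (rule derivable_L_conj)
qed

lemma contractible_R_disj:
  assumes adm: "contraction_admissible n" and prem: "derh n \<Gamma> (add_mset f (add_mset g \<Delta>))"
  shows "contractible (Suc n) \<Gamma> (add_mset (Disj f g) \<Delta>)"
proof (rule contractible_right_rule[OF adm, where X="{#}" and Y="{#f, g#}"])
  show "derivable n ({#} + \<Gamma>) ({#f, g#} + \<Delta>)"
    using derivableI[OF prem order_refl] by simp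
  show "derivable (Suc n) \<Gamma>0 (add_mset (Disj f g) \<Delta>0)"
    if "derivable n ({#} + \<Gamma>0) ({#f, g#} + \<Delta>0)" for \<Gamma>0 \<Delta>0
    using derivable_R_disj that by simp
  fix \<Delta>' assume cl: "classical (Disj f g)" and "\<Delta> = add_mset (Disj f g) \<Delta>'"
  then have "add_mset f (add_mset g \<Delta>) = add_mset (Disj f g) (add_mset f (add_mset g \<Delta>'))"
    by (simp add: add_mset_commute)
  from derh_right_inversion[OF prem[unfolded this] cl right_inversion.Disj]
  have "derivable n \<Gamma> (add_mset f (add_mset f (add_mset g (add_mset g \<Delta>'))))"
    by (simp add: add_mset_commute)
  from contract_right[OF adm _ this] cl
    have "derivable n \<Gamma> (add_mset g (add_mset g (add_mset f \<Delta>')))"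
    by (simp add: add_mset_commute)
  from contract_right[OF adm _ this] cl have "derivable n \<Gamma> (add_mset f (add_mset g \<Delta>'))"
    by (simp add: add_mset_commute)
  then show "derivable (Suc n) \<Gamma> (add_mset (Disj f g) \<Delta>')"
    by (rule derivable_R_disj)
qed

lemma contractible_R_idisj:
  assumes adm: "contraction_admissible n" and prem: "derh n \<Gamma> (add_mset (plug c h) \<Delta>)"
    and "h = f \<or> h = g"
  shows "contractible (Suc n) \<Gamma> (add_mset (plug c (IDisj f g)) \<Delta>)"
proof (rule contractible_right_rule[OF adm, where X="{#}" and Y="{#plug c h#}"])
  show "derivable n ({#} + \<Gamma>) ({#plug c h#} + \<Delta>)"
    using derivableI[OF prem order_refl] by simp
  show "derivable (Suc n) \<Gamma>0 (add_mset (plug c (IDisj f g)) \<Delta>0)"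
    if "derivable n ({#} + \<Gamma>0) ({#plug c h#} + \<Delta>0)" for \<Gamma>0 \<Delta>0
    using derivable_R_idisj that assms(3) by simp
qed (simp add: plug_IDisj_not_classical)

lemma contractible_L_idisj:
  assumes adm1: "contraction_admissible n1" and prem1: "derh n1 (add_mset (plug c f) \<Gamma>) \<Delta>"
    and adm2: "contraction_admissible n2" and prem2: "derh n2 (add_mset (plug c g) \<Gamma>) \<Delta>"
  shows "contractible (Suc (max n1 n2)) (add_mset (plug c (IDisj f g)) \<Gamma>) \<Delta>"
  unfolding contractible_def
proof (intro conjI allI impI)
  fix \<nu> \<Gamma>' assume "add_mset (plug c (IDisj f g)) \<Gamma> = add_mset \<nu> (add_mset \<nu> \<Gamma>')"
  then show "derivable (Suc (max n1 n2)) (add_mset \<nu> \<Gamma>') \<Delta>"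
  proof (cases rule: add_mset_eq_double_cases)
    case 1
    have "derivable n1 (add_mset (plug c f) \<Gamma>') \<Delta>" "derivable n2 (add_mset (plug c g) \<Gamma>') \<Delta>"
      using prem1 prem2 1
      by (auto intro!: contract_inverted_left[OF adm1] contract_inverted_left[OF adm2]
          left_inversion.ired ired_plug_IDisj simp: add_mset_commute)
    from derivable_L_idisj[OF this] 1(1) show ?thesis by simp
  next
    case (2 K)
    from prem1 prem2 2(1)
    have dup: "derivable n1 (add_mset \<nu> (add_mset \<nu> (add_mset (plug c f) K))) \<Delta>"
      "derivable n2 (add_mset \<nu> (add_mset \<nu> (add_mset (plug c g) K))) \<Delta>"
      by (auto intro: derivableI simp: add_mset_commute)
    have "derivable n1 (add_mset (plug c f) (add_mset \<nu> K)) \<Delta>"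
      "derivable n2 (add_mset (plug c g) (add_mset \<nu> K)) \<Delta>"
      using contract_left[OF adm1 dup(1)] contract_left[OF adm2 dup(2)]
      by (simp_all add: add_mset_commute)
    from derivable_L_idisj[OF this] 2(2) show ?thesis
      by (simp add: add_mset_commute)
  qed
next
  fix \<alpha> \<Delta>' assume "classical \<alpha>" "\<Delta> = add_mset \<alpha> (add_mset \<alpha> \<Delta>')"
  with prem1 prem2 have "derivable n1 (add_mset (plug c f) \<Gamma>) (add_mset \<alpha> \<Delta>')"
    "derivable n2 (add_mset (plug c g) \<Gamma>) (add_mset \<alpha> \<Delta>')"
    by (auto intro: contract_right[OF adm1] contract_right[OF adm2] derivableI)
  then show "derivable (Suc (max n1 n2)) (add_mset (plug c (IDisj f g)) \<Gamma>) (add_mset \<alpha> \<Delta>')"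
    by (rule derivable_L_idisj)
qed

lemma contract_right_L_disj:
  assumes cl: "\<forall>a\<in>#\<Lambda>. classical a"
    and adm1: "contraction_admissible n1" and prem1: "derh n1 (add_mset f \<Gamma>) \<Lambda>"
    and adm2: "contraction_admissible n2" and prem2: "derh n2 (add_mset g \<Gamma>) \<Lambda>"
    and cl\<alpha>: "classical \<alpha>" and split: "\<Lambda> + \<Delta> = add_mset \<alpha> (add_mset \<alpha> \<Delta>')"
  shows "derivable (Suc (max n1 n2)) (add_mset (Disj f g) \<Gamma>) (add_mset \<alpha> \<Delta>')"
  using split[symmetric]
proof (cases rule: double_eq_union_cases)
  case (1 \<Lambda>')
  from prem1 prem2 1(1) have "derivable n1 (add_mset f \<Gamma>) (add_mset \<alpha> \<Lambda>')"
    "derivable n2 (add_mset g \<Gamma>) (add_mset \<alpha> \<Lambda>')"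
    by (auto intro: contract_right[OF adm1 cl\<alpha>] contract_right[OF adm2 cl\<alpha>] derivableI)
  moreover have "\<forall>a\<in>#add_mset \<alpha> \<Lambda>'. classical a"
    using cl 1(1) by simp
  ultimately show ?thesis
    using derivable_L_disj[of "add_mset \<alpha> \<Lambda>'" n1 f \<Gamma> n2 g \<Delta>] 1(2) by simp
next
  case (2 \<Delta>'')
  from derivable_L_disj[OF cl derivableI[OF prem1 order_refl] derivableI[OF prem2 order_refl],
      of \<Delta>'']
  show ?thesis using 2(2) by simp
qed

lemma contractible_L_disj:
  assumes cl: "\<forall>a\<in>#\<Lambda>. classical a"
    and adm1: "contraction_admissible n1" and prem1: "derh n1 (add_mset f \<Gamma>) \<Lambda>"
    and adm2: "contraction_admissible n2" and prem2: "derh n2 (add_mset g \<Gamma>) \<Lambda>"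
  shows "contractible (Suc (max n1 n2)) (add_mset (Disj f g) \<Gamma>) (\<Lambda> + \<Delta>)"
  unfolding contractible_def
proof (intro conjI allI impI)
  fix \<nu> \<Gamma>' assume "add_mset (Disj f g) \<Gamma> = add_mset \<nu> (add_mset \<nu> \<Gamma>')"
  then show "derivable (Suc (max n1 n2)) (add_mset \<nu> \<Gamma>') (\<Lambda> + \<Delta>)"
  proof (cases rule: add_mset_eq_double_cases)
    case 1
    have "derivable n1 (add_mset f \<Gamma>') \<Lambda>" "derivable n2 (add_mset g \<Gamma>') \<Lambda>"
      using prem1 prem2 1
      by (auto intro!: contract_inverted_left[OF adm1] contract_inverted_left[OF adm2]
          left_inversion.DisjL left_inversion.DisjR simp: add_mset_commute)
    from derivable_L_disj[OF cl this] 1(1) show ?thesis by simp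
  next
    case (2 K)
    from prem1 prem2 2(1)
    have dup: "derivable n1 (add_mset \<nu> (add_mset \<nu> (add_mset f K))) \<Lambda>"
      "derivable n2 (add_mset \<nu> (add_mset \<nu> (add_mset g K))) \<Lambda>"
      by (auto intro: derivableI simp: add_mset_commute)
    have "derivable n1 (add_mset f (add_mset \<nu> K)) \<Lambda>" "derivable n2 (add_mset g (add_mset \<nu> K)) \<Lambda>"
      using contract_left[OF adm1 dup(1)] contract_left[OF adm2 dup(2)]
      by (simp_all add: add_mset_commute)
    from derivable_L_disj[OF cl this] 2(2) show ?thesis
      by (simp add: add_mset_commute)
  qed
qed (use contract_right_L_disj[OF assms] in blast)

lemma contract_right_R_conj:
  assumes cl: "\<forall>a\<in>#\<Lambda>. classical a"
    and adm1: "contraction_admissible n1" and prem1: "derh n1 \<Gamma> (add_mset f \<Lambda>)"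
    and adm2: "contraction_admissible n2" and prem2: "derh n2 \<Gamma> (add_mset g \<Lambda>)"
    and cl\<alpha>: "classical \<alpha>" and eq: "add_mset (Conj f g) (\<Lambda> + \<Delta>) = add_mset \<alpha> (add_mset \<alpha> E)"
  shows "derivable (Suc (max n1 n2)) \<Gamma> (add_mset \<alpha> E)"
proof -
  have direct: "derivable (Suc (max n1 n2)) \<Gamma> (add_mset (Conj f g) (\<Lambda> + \<Delta>'))" for \<Delta>'
    using derivable_R_conj[OF cl derivableI[OF prem1 order_refl] derivableI[OF prem2 order_refl]] .
  from eq show ?thesis
  proof (cases rule: add_mset_eq_double_cases)
    case 1
    from 1(2)[symmetric] show ?thesis
    proof (cases rule: add_mset_eq_union_cases)
      case (1 \<Lambda>')
      with prem1 prem2 have "derh n1 \<Gamma> (add_mset \<alpha> (add_mset f \<Lambda>'))"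
        "derh n2 \<Gamma> (add_mset \<alpha> (add_mset g \<Lambda>'))"
        by (simp_all add: add_mset_commute)
      then have "derivable n1 \<Gamma> (add_mset f \<Lambda>')" "derivable n2 \<Gamma> (add_mset g \<Lambda>')"
        using cl\<alpha> \<open>Conj f g = \<alpha>\<close>
        by (auto intro: contract_inverted_right[OF adm1] contract_inverted_right[OF adm2]
            right_inversion.ConjL right_inversion.ConjR)
      from derivable_R_conj[OF _ this, of \<Delta>] cl 1 \<open>Conj f g = \<alpha>\<close> show ?thesis by simp
    next
      case (2 \<Delta>'')
      with direct[of \<Delta>''] \<open>Conj f g = \<alpha>\<close> show ?thesis by simp
    qed
  next
    case (2 K)
    from 2(1)[symmetric] show ?thesis
    proof (cases rule: double_eq_union_cases)
      case (1 \<Lambda>')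
      have "derivable n1 \<Gamma> (add_mset \<alpha> (add_mset \<alpha> (add_mset f \<Lambda>')))"
        "derivable n2 \<Gamma> (add_mset \<alpha> (add_mset \<alpha> (add_mset g \<Lambda>')))"
        using derivableI[OF prem1 order_refl] derivableI[OF prem2 order_refl] 1(1)
        by (simp_all add: add_mset_commute)
      then have "derivable n1 \<Gamma> (add_mset f (add_mset \<alpha> \<Lambda>'))"
        "derivable n2 \<Gamma> (add_mset g (add_mset \<alpha> \<Lambda>'))"
        using contract_right[OF adm1 cl\<alpha>] contract_right[OF adm2 cl\<alpha>]
        by (simp_all add: add_mset_commute)
      from derivable_R_conj[OF _ this, of \<Delta>] cl 1 2(2) show ?thesis by (simp add: add_mset_commute)
    next
      case (2 \<Delta>'')
      then have "add_mset \<alpha> E = add_mset (Conj f g) (\<Lambda> + \<Delta>'')"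
        using \<open>E = add_mset (Conj f g) K\<close> by (metis add_mset_commute)
      with direct[of \<Delta>''] show ?thesis by simp
    qed
  qed
qed

lemma contractible_R_conj:
  assumes cl: "\<forall>a\<in>#\<Lambda>. classical a"
    and adm1: "contraction_admissible n1" and prem1: "derh n1 \<Gamma> (add_mset f \<Lambda>)"
    and adm2: "contraction_admissible n2" and prem2: "derh n2 \<Gamma> (add_mset g \<Lambda>)"
  shows "contractible (Suc (max n1 n2)) \<Gamma> (add_mset (Conj f g) (\<Lambda> + \<Delta>))"
  unfolding contractible_def
proof (intro conjI allI impI)
  fix \<nu> \<Gamma>' assume "\<Gamma> = add_mset \<nu> (add_mset \<nu> \<Gamma>')"
  with prem1 prem2 have "derivable n1 (add_mset \<nu> \<Gamma>') (add_mset f \<Lambda>)"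
    "derivable n2 (add_mset \<nu> \<Gamma>') (add_mset g \<Lambda>)"
    by (auto intro: contract_left[OF adm1] contract_left[OF adm2] derivableI)
  from derivable_R_conj[OF cl this]
  show "derivable (Suc (max n1 n2)) (add_mset \<nu> \<Gamma>') (add_mset (Conj f g) (\<Lambda> + \<Delta>))" .
qed (use contract_right_R_conj[OF assms] in blast)

lemma contraction_admissible_all: "contraction_admissible n"
proof (induction n rule: less_induct)
  case (less n)
  have adm: "contraction_admissible k" if "Suc k \<le> n" for k
    using less.IH that by simp
  have top: "contractible n \<Gamma> \<Delta>" if "derh n \<Gamma> \<Delta>" for \<Gamma> \<Delta>
    using that
  proof cases
    case (ax_atom p \<Gamma>0 \<Delta>0)
    then show ?thesis
      by (intro contractible_initial derivable_ax_atom) (auto simp: set_eq_iff)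
  next
    case (ax_bot \<Gamma>0)
    then show ?thesis
      by (intro contractible_initial derivable_ax_bot) (auto simp: set_eq_iff)
  qed (simp_all add: adm contractible_L_neg contractible_R_neg contractible_L_conj
      contractible_R_conj contractible_L_disj contractible_R_disj contractible_L_idisj
      contractible_R_idisj)
  show ?case
    unfolding contraction_admissible_def
  proof (intro allI impI)
    fix \<Gamma> \<Delta> assume "derivable n \<Gamma> \<Delta>"
    then obtain m where "m \<le> n" and m: "derh m \<Gamma> \<Delta>"
      unfolding derivable_def by blast
    show "contractible n \<Gamma> \<Delta>"
    proof (cases "m = n")
      case False
      with \<open>m \<le> n\<close> less.IH have "contraction_admissible m" by simp
      with derivableI[OF m order_refl] have "contractible m \<Gamma> \<Delta>"
        unfolding contraction_admissible_def by blast
      then show ?thesis using \<open>m \<le> n\<close> by (rule contractible_mono)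
    qed (use top m in simp)
  qed
qed

theorem lemma4p3:
  fixes n :: nat and \<Gamma> \<Delta> :: "fm multiset" and \<nu> \<alpha> :: fm
  assumes "n \<ge> 1"
    and "\<forall>\<phi>\<in>#\<Gamma>. wff \<phi>" and "\<forall>\<phi>\<in>#\<Delta>. wff \<phi>"
    and "wff \<nu>" and "classical \<alpha>"
  shows "(derivable n (\<Gamma> + {#\<nu>, \<nu>#}) \<Delta> \<longrightarrow> derivable n (\<Gamma> + {#\<nu>#}) \<Delta>) \<and>
         (derivable n \<Gamma> ({#\<alpha>, \<alpha>#} + \<Delta>) \<longrightarrow> derivable n \<Gamma> ({#\<alpha>#} + \<Delta>))"
  using contract_left[OF contraction_admissible_all, of n \<nu> \<Gamma> \<Delta>]
    contract_right[OF contraction_admissible_all \<open>classical \<alpha>\<close>, of n \<Gamma> \<Delta>]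
  by simp

end
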